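(* Fix an input $x$ with $n=n(x)\ge2$ tokens and a mask $m\in\{0,1\}^{|\mathrm H|}$ with pruning ratio $\rho$, i.e. $\sum_{h=1}^{|\mathrm H|}(1-m_h)=|\mathrm H|\rho$. For each head $h$ and query token $t\in\{1,\dots,n\}$ let $\boldsymbol\alpha^{(h)}_t,\boldsymbol\alpha'^{(h)}_t\in\Delta^{n-1}$ be the attention distributions of the models trained on two neighboring datasets $\mathcal S,\mathcal S'$, and let $V_h\in\mathbb R^{n\times d_v}$ be a common value matrix with $\max_h\|V_h\|_{\infty\to2}\le M$. Set $\Delta_h(t)=(\boldsymbol\alpha^{(h)}_t-\boldsymbol\alpha'^{(h)}_t)^\top V_h$ and $$\|\Delta(x)\|_2:=\frac1n\sum_{t=1}^n\sum_{h=1}^{|\mathrm H|}(1-m_h)\|\Delta_h(t)\|_2.$$ Then $$\|\Delta(x)\|_2\;\le\;M\sqrt{8\log n}\sum_{h=1}^{|\mathrm H|}(1-m_h)\sqrt{\overline{\mathrm{AD}}_h(x)}\;\le\;\sqrt8\,M\sqrt{|\mathrm H|\rho\log n}\;\sqrt{\sum_{h=1}^{|\mathrm H|}(1-m_h)\,\overline{\mathrm{AD}}_h(x)}.$$ Moreover, if all inputs have the same length $n$, then for any distribution over $x$, $$\mathbb E\bigl[\|\Delta(x)\|_2\bigr]\le\sqrt8\,M\sqrt{|\mathrm H|\rho\log n}\;\sqrt{\sum_{h=1}^{|\mathrm H|}(1-m_h)\,\mathbb E\bigl[\overline{\mathrm{AD}}_h(x)\bigr]}.$$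
   Context: $\Delta^{n-1}$ is the probability simplex; $H(\mathbf p)=-\sum_jp_j\log p_j$. $\|V\|_{\infty\to2}:=\max_j\|V(j,:)\|_2$ (maximum row Euclidean norm). Neighboring datasets differ in exactly one example. Token-averaged, length-normalized attention deficits: $\mathrm{AD}_h(x)=\frac{1}{n\log n}\sum_{t=1}^n\bigl(\log n-H(\boldsymbol\alpha^{(h)}_t)\bigr)\in[0,1]$, $\mathrm{AD}'_h(x)$ defined likewise with $\boldsymbol\alpha'^{(h)}_t$, and $\overline{\mathrm{AD}}_h(x)=\tfrac12(\mathrm{AD}_h(x)+\mathrm{AD}'_h(x))$. Equivalently $\mathrm{AD}_h=1-\mathrm{AE}_h$ with $\mathrm{AE}_h(x)=\frac{1}{n\log n}\sum_tH(\boldsymbol\alpha^{(h)}_t)$. *)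

theory Defs
  imports "HOL-Probability.Probability"
begin

text \<open>Conventions: heads are indexed by h < K (K = |H|), tokens/positions by
  t, j < n, value coordinates by k < d (d = d_v).  A per-head attention family is
  a function  a :: nat => nat => real  with  a t j = alpha_t(j).\<close>

definition in_simplex :: "nat \<Rightarrow> (nat \<Rightarrow> real) \<Rightarrow> bool" where
  "in_simplex n p \<longleftrightarrow> (\<forall>j<n. 0 \<le> p j) \<and> (\<Sum>j<n. p j) = 1"

definition entropy :: "nat \<Rightarrow> (nat \<Rightarrow> real) \<Rightarrow> real" where
  "entropy n p = - (\<Sum>j<n. if p j = 0 then 0 else p j * ln (p j))"

definition AD :: "nat \<Rightarrow> (nat \<Rightarrow> nat \<Rightarrow> real) \<Rightarrow> real" where
  "AD n a = (1 / (real n * ln (real n))) * (\<Sum>t<n. ln (real n) - entropy n (a t))"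

definition ADbar :: "nat \<Rightarrow> (nat \<Rightarrow> nat \<Rightarrow> real) \<Rightarrow> (nat \<Rightarrow> nat \<Rightarrow> real) \<Rightarrow> real" where
  "ADbar n a a' = (AD n a + AD n a') / 2"

definition l2norm :: "nat \<Rightarrow> (nat \<Rightarrow> real) \<Rightarrow> real" where
  "l2norm d v = sqrt (\<Sum>k<d. (v k)\<^sup>2)"

definition inf2_norm :: "nat \<Rightarrow> nat \<Rightarrow> (nat \<Rightarrow> nat \<Rightarrow> real) \<Rightarrow> real" where
  "inf2_norm n d W = Max ((\<lambda>j. l2norm d (W j)) ` {..<n})"

definition Delta_vec :: "nat \<Rightarrow> (nat \<Rightarrow> nat \<Rightarrow> real) \<Rightarrow> (nat \<Rightarrow> nat \<Rightarrow> real)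
    \<Rightarrow> (nat \<Rightarrow> nat \<Rightarrow> real) \<Rightarrow> nat \<Rightarrow> nat \<Rightarrow> real" where
  "Delta_vec n a a' W t k = (\<Sum>j<n. (a t j - a' t j) * W j k)"

definition Delta_norm :: "nat \<Rightarrow> nat \<Rightarrow> nat \<Rightarrow> (nat \<Rightarrow> real)
    \<Rightarrow> (nat \<Rightarrow> nat \<Rightarrow> nat \<Rightarrow> real) \<Rightarrow> (nat \<Rightarrow> nat \<Rightarrow> nat \<Rightarrow> real)
    \<Rightarrow> (nat \<Rightarrow> nat \<Rightarrow> nat \<Rightarrow> real) \<Rightarrow> real" where
  "Delta_norm n K d m \<alpha> \<alpha>' V =
     (1 / real n) * (\<Sum>t<n. \<Sum>h<K. (1 - m h) * l2norm d (Delta_vec n (\<alpha> h) (\<alpha>' h) (V h) t))"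

definition setting :: "nat \<Rightarrow> nat \<Rightarrow> nat \<Rightarrow> (nat \<Rightarrow> real) \<Rightarrow> real \<Rightarrow> real
    \<Rightarrow> (nat \<Rightarrow> nat \<Rightarrow> nat \<Rightarrow> real) \<Rightarrow> (nat \<Rightarrow> nat \<Rightarrow> nat \<Rightarrow> real)
    \<Rightarrow> (nat \<Rightarrow> nat \<Rightarrow> nat \<Rightarrow> real) \<Rightarrow> bool" where
  "setting n K d m \<rho> M \<alpha> \<alpha>' V \<longleftrightarrow>
     2 \<le> n \<and>
     (\<forall>h<K. m h \<in> {0, 1}) \<and>
     (\<Sum>h<K. 1 - m h) = real K * \<rho> \<and>
     (\<forall>h<K. \<forall>t<n. in_simplex n (\<alpha> h t) \<and> in_simplex n (\<alpha>' h t)) \<and>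
     (\<forall>h<K. inf2_norm n d (V h) \<le> M)"

end

theory Submission
  imports Defs
begin

text \<open>For an attention row p, log n - H(p) is the Kullback-Leibler divergence from p to the
  uniform distribution u, so by Pinsker's inequality ||p - u||_1 <= sqrt (2 (log n - H(p))).
  Since ||(p - p')^T V||_2 <= M ||p - p'||_1 <= M (||p - u||_1 + ||p' - u||_1), averaging over the
  tokens (mean <= root mean square) and combining the two models by
  sqrt a + sqrt b <= sqrt (2 (a + b)) bounds the contribution of head h by
  M sqrt (8 log n ADbar_h).  Cauchy-Schwarz over the |H| rho pruned heads gives the second
  inequality, and the expected bound follows from the pointwise one because sqrt is concave.\<close>

lemma xlnx_quadratic_lower_bound:
  fixes x :: real
  assumes "0 \<le> x"
  shows "3 * (x - 1)^2 \<le> 2 * (x + 2) * (x * ln x - x + 1)"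
proof -
  define g where "g y = 2 * (y + 2) * (y * ln y - y + 1) - 3 * (y - 1)^2" for y :: real
  define g' where "g' y = 4 * y * ln y + 4 * ln y - 8 * y + 8" for y :: real
  have g_deriv: "DERIV g y :> g' y" if "0 < y" for y
    unfolding g_def g'_def using that
    by (auto intro!: derivative_eq_intros simp: field_simps power2_eq_square)
  have g'_deriv: "DERIV g' y :> 4 * (ln y + 1 / y - 1)" if "0 < y" for y
    unfolding g'_def using that by (auto intro!: derivative_eq_intros simp: field_simps)
  have g'_mono: "g' a \<le> g' b" if "0 < a" "a \<le> b" for a b
  proof (rule DERIV_nonneg_imp_nondecreasing[OF \<open>a \<le> b\<close>])
    fix y assume "a \<le> y" "y \<le> b"
    with \<open>0 < a\<close> have "0 < y" by simp
    have "0 \<le> ln y + 1 / y - 1"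
      using ln_le_minus_one[of "1 / y"] \<open>0 < y\<close> by (simp add: ln_div)
    then show "\<exists>D. DERIV g' y :> D \<and> 0 \<le> D"
      using g'_deriv[OF \<open>0 < y\<close>] by auto
  qed
  have "g' 1 = 0" "g 1 = 0" by (simp_all add: g_def g'_def)
  have "g 1 \<le> g x"
  proof (cases "1 \<le> x")
    case True
    show ?thesis
    proof (rule DERIV_nonneg_imp_nondecreasing[of 1 x g, OF True])
      fix y assume "1 \<le> y" "y \<le> x"
      then show "\<exists>D. DERIV g y :> D \<and> 0 \<le> D"
        using g_deriv[of y] g'_mono[of 1 y] \<open>g' 1 = 0\<close> by (intro exI[of _ "g' y"]) auto
    qed
  next
    case False
    show ?thesis
    proof (cases "x = 0")
      case True
      then show ?thesis by (simp add: g_def)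
    next
      case False
      with assms have "0 < x" by simp
      show ?thesis
      proof (rule DERIV_nonpos_imp_nonincreasing[of x 1 g])
        show "x \<le> 1" using \<open>\<not> 1 \<le> x\<close> by simp
        fix y assume "x \<le> y" "y \<le> 1"
        then show "\<exists>D. DERIV g y :> D \<and> D \<le> 0"
          using \<open>0 < x\<close> g_deriv[of y] g'_mono[of y 1] \<open>g' 1 = 0\<close>
          by (intro exI[of _ "g' y"]) auto
      qed
    qed
  qed
  then show ?thesis using \<open>g 1 = 0\<close> by (simp add: g_def)
qed

lemma kl_term_lower_bound:
  fixes p q :: real
  assumes "0 \<le> p" "0 < q"
  shows "3 * (p - q)^2 / (2 * (p + 2 * q)) + (p - q) \<le> (if p = 0 then 0 else p * ln (p / q))"
proof -
  define x where "x = p / q"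
  have p: "p = q * x" and "0 \<le> x" using assms by (simp_all add: x_def)
  have "p - q = q * (x - 1)" "p + 2 * q = q * (x + 2)" by (simp_all add: p algebra_simps)
  then have "3 * (p - q)^2 / (2 * (p + 2 * q)) = q * (3 * (x - 1)^2 / (2 * (x + 2)))"
    using assms by (simp add: power2_eq_square)
  also have "\<dots> \<le> q * (x * ln x - x + 1)"
    using xlnx_quadratic_lower_bound[OF \<open>0 \<le> x\<close>] assms \<open>0 \<le> x\<close>
    by (intro mult_left_mono) (simp_all add: divide_le_eq mult.commute)
  also have "\<dots> = (if p = 0 then 0 else p * ln (p / q)) - (p - q)"
    using assms by (cases "x = 0") (simp_all add: p algebra_simps)
  finally show ?thesis by simp
qed

definition kl_div :: "nat \<Rightarrow> (nat \<Rightarrow> real) \<Rightarrow> (nat \<Rightarrow> real) \<Rightarrow> real" where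
  "kl_div n p q = (\<Sum>j<n. if p j = 0 then 0 else p j * ln (p j / q j))"

lemma in_simplex_imp_pos: "in_simplex n p \<Longrightarrow> 0 < n"
  by (cases n) (auto simp: in_simplex_def)

lemma kl_div_uniform:
  assumes p: "in_simplex n p"
  shows "kl_div n p (\<lambda>_. 1 / real n) = ln (real n) - entropy n p"
proof -
  have "0 < n" using in_simplex_imp_pos[OF p] .
  have "kl_div n p (\<lambda>_. 1 / real n)
      = (\<Sum>j<n. p j * ln (real n) + (if p j = 0 then 0 else p j * ln (p j)))"
    unfolding kl_div_def
  proof (intro sum.cong refl)
    fix j assume "j \<in> {..<n}"
    then have "0 \<le> p j" using p by (simp add: in_simplex_def)
    then show "(if p j = 0 then 0 else p j * ln (p j / (1 / real n)))
        = p j * ln (real n) + (if p j = 0 then 0 else p j * ln (p j))"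
      using \<open>0 < n\<close> by (auto simp: ln_mult algebra_simps)
  qed
  also have "\<dots> = ln (real n) - entropy n p"
    using p by (simp add: entropy_def in_simplex_def sum.distrib flip: sum_distrib_right)
  finally show ?thesis .
qed

text \<open>Cauchy-Schwarz with the weights p + 2q, of total mass 3, reduces Pinsker's inequality to
  the termwise bound kl_term_lower_bound.\<close>
lemma pinsker:
  assumes p: "in_simplex n p" and q_pos: "\<And>j. j < n \<Longrightarrow> 0 < q j" and q_sum: "(\<Sum>j<n. q j) = 1"
  shows "(\<Sum>j<n. \<bar>p j - q j\<bar>)^2 \<le> 2 * kl_div n p q"
proof -
  define w where "w j = p j + 2 * q j" for j
  have p_nonneg: "\<And>j. j < n \<Longrightarrow> 0 \<le> p j" and p_sum: "(\<Sum>j<n. p j) = 1"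
    using p by (auto simp: in_simplex_def)
  have w_pos: "0 < w j" if "j < n" for j
    using p_nonneg[OF that] q_pos[OF that] by (simp add: w_def)
  have w_sum: "(\<Sum>j<n. w j) = 3"
    using p_sum q_sum by (simp add: w_def sum.distrib flip: sum_distrib_left)
  have "sqrt (w j) * (\<bar>p j - q j\<bar> / sqrt (w j)) = \<bar>p j - q j\<bar>" if "j < n" for j
    using w_pos[OF that] by simp
  then have "(\<Sum>j<n. \<bar>p j - q j\<bar>)^2 = (\<Sum>j<n. sqrt (w j) * (\<bar>p j - q j\<bar> / sqrt (w j)))^2"
    by simp
  also have "\<dots> \<le> (\<Sum>j<n. (sqrt (w j))^2) * (\<Sum>j<n. (\<bar>p j - q j\<bar> / sqrt (w j))^2)"
    by (rule Cauchy_Schwarz_ineq_sum)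
  also have "\<dots> = 2 * (\<Sum>j<n. 3 * (p j - q j)^2 / (2 * w j) + (p j - q j))"
    using w_pos w_sum p_sum q_sum
    by (simp add: power_divide less_imp_le sum.distrib sum_subtractf sum_distrib_left)
  also have "\<dots> \<le> 2 * kl_div n p q"
    unfolding kl_div_def w_def using p_nonneg q_pos by (intro mult_left_mono sum_mono kl_term_lower_bound) auto
  finally show ?thesis .
qed

corollary pinsker_uniform:
  assumes "in_simplex n p"
  shows "(\<Sum>j<n. \<bar>p j - 1 / real n\<bar>)^2 \<le> 2 * (ln (real n) - entropy n p)"
  using pinsker[OF assms, of "\<lambda>_. 1 / real n"] in_simplex_imp_pos[OF assms]
  by (simp add: kl_div_uniform[OF assms])

lemma entropy_le_ln: "in_simplex n p \<Longrightarrow> entropy n p \<le> ln (real n)"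
  using pinsker_uniform[of n p] by (smt (verit) zero_le_power2)

lemma AD_nonneg:
  assumes "\<And>t. t < n \<Longrightarrow> in_simplex n (a t)"
  shows "0 \<le> AD n a"
proof -
  have "0 \<le> real n * ln (real n)" by (cases n) auto
  moreover have "0 \<le> (\<Sum>t<n. ln (real n) - entropy n (a t))"
    using assms entropy_le_ln by (intro sum_nonneg) simp
  ultimately show ?thesis unfolding AD_def by simp
qed

lemma L2_set_sum_le: "L2_set (\<lambda>k. \<Sum>j\<in>J. f j k) A \<le> (\<Sum>j\<in>J. L2_set (f j) A)"
proof (induction J rule: infinite_finite_induct)
  case (infinite J)
  then show ?case by (simp add: L2_set_def)
next
  case empty
  then show ?case by (simp add: L2_set_def)
next
  case (insert i J)
  have "L2_set (\<lambda>k. \<Sum>j\<in>insert i J. f j k) A = L2_set (\<lambda>k. f i k + (\<Sum>j\<in>J. f j k)) A"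
    using insert by simp
  also have "\<dots> \<le> L2_set (f i) A + L2_set (\<lambda>k. \<Sum>j\<in>J. f j k) A"
    by (rule L2_set_triangle_ineq)
  also have "\<dots> \<le> (\<Sum>j\<in>insert i J. L2_set (f j) A)"
    using insert by simp
  finally show ?case .
qed

lemma l2norm_le_inf2_norm: "j < n \<Longrightarrow> l2norm d (W j) \<le> inf2_norm n d W"
  unfolding inf2_norm_def by (intro Max_ge) auto

lemma inf2_norm_nonneg: "0 < n \<Longrightarrow> 0 \<le> inf2_norm n d W"
  using l2norm_le_inf2_norm[of 0 n d W] unfolding l2norm_def
  by (meson order_trans real_sqrt_ge_zero sum_nonneg zero_le_power2)

lemma l2norm_Delta_vec_le:
  assumes "inf2_norm n d W \<le> M"
  shows "l2norm d (Delta_vec n a a' W t) \<le> M * (\<Sum>j<n. \<bar>a t j - a' t j\<bar>)"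
proof -
  have "l2norm d (Delta_vec n a a' W t) = L2_set (\<lambda>k. \<Sum>j<n. (a t j - a' t j) * W j k) {..<d}"
    by (simp add: l2norm_def L2_set_def Delta_vec_def)
  also have "\<dots> \<le> (\<Sum>j<n. L2_set (\<lambda>k. (a t j - a' t j) * W j k) {..<d})"
    by (rule L2_set_sum_le)
  also have "\<dots> = (\<Sum>j<n. \<bar>a t j - a' t j\<bar> * l2norm d (W j))"
    by (simp add: L2_set_def l2norm_def power_mult_distrib real_sqrt_mult flip: sum_distrib_left)
  also have "\<dots> \<le> (\<Sum>j<n. \<bar>a t j - a' t j\<bar> * M)"
    using assms by (intro sum_mono mult_left_mono) (auto intro: order_trans[OF l2norm_le_inf2_norm])
  finally show ?thesis by (simp add: sum_distrib_left mult.commute)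
qed

lemma mean_le_sqrt_mean_square:
  fixes L :: "nat \<Rightarrow> real"
  shows "(\<Sum>t<n. L t) / real n \<le> sqrt ((\<Sum>t<n. (L t)^2) / real n)"
proof (rule real_le_rsqrt)
  have "(\<Sum>t<n. 1 * L t)^2 \<le> (\<Sum>t<n. 1^2) * (\<Sum>t<n. (L t)^2)"
    by (rule Cauchy_Schwarz_ineq_sum)
  then have "(\<Sum>t<n. L t)^2 / (real n)^2 \<le> real n * (\<Sum>t<n. (L t)^2) / (real n)^2"
    by (intro divide_right_mono) auto
  then show "((\<Sum>t<n. L t) / real n)^2 \<le> (\<Sum>t<n. (L t)^2) / real n"
    by (cases "n = 0") (simp_all add: power_divide power2_eq_square)
qed

lemma sqrt_add_le_sqrt_double_sum:
  fixes a b :: real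
  assumes "0 \<le> a" "0 \<le> b"
  shows "sqrt a + sqrt b \<le> sqrt (2 * (a + b))"
proof (rule real_le_rsqrt)
  have "0 \<le> (sqrt a - sqrt b)^2" by simp
  then show "(sqrt a + sqrt b)^2 \<le> 2 * (a + b)"
    using assms by (simp add: power2_eq_square algebra_simps)
qed

lemma mean_l1_dist_uniform_le:
  assumes n: "2 \<le> n" and rows: "\<And>t. t < n \<Longrightarrow> in_simplex n (a t)"
  shows "(\<Sum>t<n. \<Sum>j<n. \<bar>a t j - 1 / real n\<bar>) / real n \<le> sqrt (2 * ln (real n) * AD n a)"
proof -
  have "0 < ln (real n)" "0 < real n" using n by simp_all
  then have AD_eq: "2 * ln (real n) * AD n a = 2 * (\<Sum>t<n. ln (real n) - entropy n (a t)) / real n"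
    unfolding AD_def by (simp add: field_simps)
  have "(\<Sum>t<n. \<Sum>j<n. \<bar>a t j - 1 / real n\<bar>) / real n
      \<le> sqrt ((\<Sum>t<n. (\<Sum>j<n. \<bar>a t j - 1 / real n\<bar>)^2) / real n)"
    by (rule mean_le_sqrt_mean_square)
  also have "\<dots> \<le> sqrt (2 * (\<Sum>t<n. ln (real n) - entropy n (a t)) / real n)"
    unfolding sum_distrib_left using rows pinsker_uniform
    by (intro real_sqrt_le_mono divide_right_mono sum_mono) auto
  finally show ?thesis by (simp only: AD_eq)
qed

lemma ADbar_nonneg:
  assumes "\<And>t. t < n \<Longrightarrow> in_simplex n (a t) \<and> in_simplex n (a' t)"
  shows "0 \<le> ADbar n a a'"
  using AD_nonneg[of n a] AD_nonneg[of n a'] assms by (simp add: ADbar_def)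

lemma mean_l2norm_Delta_vec_le:
  assumes n: "2 \<le> n" and rows: "\<And>t. t < n \<Longrightarrow> in_simplex n (a t) \<and> in_simplex n (a' t)"
    and W: "inf2_norm n d W \<le> M"
  shows "(\<Sum>t<n. l2norm d (Delta_vec n a a' W t)) / real n
      \<le> M * sqrt (8 * ln (real n)) * sqrt (ADbar n a a')"
proof -
  define L where "L b = (\<Sum>t<n. \<Sum>j<n. \<bar>b t j - 1 / real n\<bar>) / real n" for b :: "nat \<Rightarrow> nat \<Rightarrow> real"
  have "0 \<le> M" using inf2_norm_nonneg[of n d W] n W by simp
  have "0 \<le> ln (real n)" using n by simp
  have "(\<Sum>t<n. l2norm d (Delta_vec n a a' W t))
      \<le> (\<Sum>t<n. M * ((\<Sum>j<n. \<bar>a t j - 1 / real n\<bar>) + (\<Sum>j<n. \<bar>a' t j - 1 / real n\<bar>)))"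
  proof (rule sum_mono)
    fix t
    have "l2norm d (Delta_vec n a a' W t) \<le> M * (\<Sum>j<n. \<bar>a t j - a' t j\<bar>)"
      using W by (rule l2norm_Delta_vec_le)
    also have "\<dots> \<le> M * ((\<Sum>j<n. \<bar>a t j - 1 / real n\<bar>) + (\<Sum>j<n. \<bar>a' t j - 1 / real n\<bar>))"
      using \<open>0 \<le> M\<close> by (intro mult_left_mono) (auto simp flip: sum.distrib intro: sum_mono)
    finally show "l2norm d (Delta_vec n a a' W t)
      \<le> M * ((\<Sum>j<n. \<bar>a t j - 1 / real n\<bar>) + (\<Sum>j<n. \<bar>a' t j - 1 / real n\<bar>))" .
  qed
  also have "\<dots> = M * ((\<Sum>t<n. \<Sum>j<n. \<bar>a t j - 1 / real n\<bar>) + (\<Sum>t<n. \<Sum>j<n. \<bar>a' t j - 1 / real n\<bar>))"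
    by (simp add: sum.distrib flip: sum_distrib_left)
  finally have "(\<Sum>t<n. l2norm d (Delta_vec n a a' W t)) / real n
      \<le> M * ((\<Sum>t<n. \<Sum>j<n. \<bar>a t j - 1 / real n\<bar>) + (\<Sum>t<n. \<Sum>j<n. \<bar>a' t j - 1 / real n\<bar>)) / real n"
    by (rule divide_right_mono) simp
  also have "\<dots> = M * (L a + L a')"
    unfolding L_def by (simp add: add_divide_distrib distrib_left)
  also have "\<dots> \<le> M * (sqrt (2 * ln (real n) * AD n a) + sqrt (2 * ln (real n) * AD n a'))"
    unfolding L_def using n rows \<open>0 \<le> M\<close>
    by (intro mult_left_mono add_mono mean_l1_dist_uniform_le) auto
  also have "\<dots> \<le> M * sqrt (2 * (2 * ln (real n) * AD n a + 2 * ln (real n) * AD n a'))"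
    using rows AD_nonneg[of n a] AD_nonneg[of n a'] \<open>0 \<le> M\<close> \<open>0 \<le> ln (real n)\<close>
    by (intro mult_left_mono sqrt_add_le_sqrt_double_sum) auto
  also have "\<dots> = M * sqrt (8 * ln (real n)) * sqrt (ADbar n a a')"
    by (simp add: ADbar_def algebra_simps flip: real_sqrt_mult)
  finally show ?thesis .
qed

lemma sum_weighted_sqrt_le:
  fixes c A :: "'a \<Rightarrow> real"
  assumes "\<And>i. i \<in> I \<Longrightarrow> 0 \<le> c i" "\<And>i. i \<in> I \<Longrightarrow> 0 \<le> A i"
  shows "(\<Sum>i\<in>I. c i * sqrt (A i)) \<le> sqrt (\<Sum>i\<in>I. c i) * sqrt (\<Sum>i\<in>I. c i * A i)"
proof -
  have "(\<Sum>i\<in>I. c i * sqrt (A i)) = (\<Sum>i\<in>I. sqrt (c i) * sqrt (c i * A i))"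
    using assms by (intro sum.cong) (auto simp: real_sqrt_mult mult.assoc[symmetric])
  also have "\<dots> \<le> sqrt ((\<Sum>i\<in>I. (sqrt (c i))^2) * (\<Sum>i\<in>I. (sqrt (c i * A i))^2))"
    by (rule real_le_rsqrt) (rule Cauchy_Schwarz_ineq_sum)
  also have "\<dots> = sqrt ((\<Sum>i\<in>I. c i) * (\<Sum>i\<in>I. c i * A i))"
    using assms by (intro arg_cong[where f = sqrt] arg_cong2[where f = "(*)"] sum.cong) auto
  also have "\<dots> = sqrt (\<Sum>i\<in>I. c i) * sqrt (\<Sum>i\<in>I. c i * A i)"
    by (rule real_sqrt_mult)
  finally show ?thesis .
qed

lemma setting_mask_weight_nonneg: "setting n K d m \<rho> M \<alpha> \<alpha>' V \<Longrightarrow> h < K \<Longrightarrow> 0 \<le> 1 - m h"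
  unfolding setting_def by force

lemma setting_ADbar_nonneg: "setting n K d m \<rho> M \<alpha> \<alpha>' V \<Longrightarrow> h < K \<Longrightarrow> 0 \<le> ADbar n (\<alpha> h) (\<alpha>' h)"
  unfolding setting_def by (auto intro!: ADbar_nonneg)

lemma setting_M_nonneg: "setting n K d m \<rho> M \<alpha> \<alpha>' V \<Longrightarrow> 0 < K \<Longrightarrow> 0 \<le> M"
  unfolding setting_def using inf2_norm_nonneg[of n d "V 0"] by force

lemma setting_pruned_heads_nonneg: "setting n K d m \<rho> M \<alpha> \<alpha>' V \<Longrightarrow> 0 \<le> real K * \<rho>"
  using setting_mask_weight_nonneg[of n K d m \<rho> M \<alpha> \<alpha>' V]
  by (metis (no_types, lifting) lessThan_iff setting_def sum_nonneg)

lemma Delta_norm_eq_sum_heads: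
  "Delta_norm n K d m \<alpha> \<alpha>' V
    = (\<Sum>h<K. (1 - m h) * ((\<Sum>t<n. l2norm d (Delta_vec n (\<alpha> h) (\<alpha>' h) (V h) t)) / real n))"
  unfolding Delta_norm_def
  by (simp add: sum.swap[of _ "{..<n}"] sum_distrib_left sum_divide_distrib mult.assoc mult.left_commute)

lemma Delta_norm_le_sum_sqrt_ADbar:
  assumes st: "setting n K d m \<rho> M \<alpha> \<alpha>' V"
  shows "Delta_norm n K d m \<alpha> \<alpha>' V
    \<le> M * sqrt (8 * ln (real n)) * (\<Sum>h<K. (1 - m h) * sqrt (ADbar n (\<alpha> h) (\<alpha>' h)))"
proof -
  have head: "(\<Sum>t<n. l2norm d (Delta_vec n (\<alpha> h) (\<alpha>' h) (V h) t)) / real n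
      \<le> M * sqrt (8 * ln (real n)) * sqrt (ADbar n (\<alpha> h) (\<alpha>' h))" if "h < K" for h
    using st that by (intro mean_l2norm_Delta_vec_le) (auto simp: setting_def)
  have "Delta_norm n K d m \<alpha> \<alpha>' V
      \<le> (\<Sum>h<K. (1 - m h) * (M * sqrt (8 * ln (real n)) * sqrt (ADbar n (\<alpha> h) (\<alpha>' h))))"
    unfolding Delta_norm_eq_sum_heads
    using head setting_mask_weight_nonneg[OF st] by (intro sum_mono mult_left_mono) auto
  then show ?thesis
    by (simp add: sum_distrib_left mult.assoc mult.left_commute)
qed

lemma sum_sqrt_ADbar_le:
  assumes st: "setting n K d m \<rho> M \<alpha> \<alpha>' V"
  shows "M * sqrt (8 * ln (real n)) * (\<Sum>h<K. (1 - m h) * sqrt (ADbar n (\<alpha> h) (\<alpha>' h)))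
    \<le> sqrt 8 * M * sqrt (real K * \<rho> * ln (real n)) * sqrt (\<Sum>h<K. (1 - m h) * ADbar n (\<alpha> h) (\<alpha>' h))"
proof (cases "K = 0")
  case True
  then show ?thesis by simp
next
  case False
  have "0 \<le> M" using setting_M_nonneg[OF st] False by simp
  have "2 \<le> n" using st by (simp add: setting_def)
  have pruned: "(\<Sum>h<K. 1 - m h) = real K * \<rho>" using st by (simp add: setting_def)
  have "(\<Sum>h<K. (1 - m h) * sqrt (ADbar n (\<alpha> h) (\<alpha>' h)))
      \<le> sqrt (real K * \<rho>) * sqrt (\<Sum>h<K. (1 - m h) * ADbar n (\<alpha> h) (\<alpha>' h))"
    unfolding pruned[symmetric]
    using setting_mask_weight_nonneg[OF st] setting_ADbar_nonneg[OF st]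
    by (intro sum_weighted_sqrt_le) auto
  then have "M * sqrt (8 * ln (real n)) * (\<Sum>h<K. (1 - m h) * sqrt (ADbar n (\<alpha> h) (\<alpha>' h)))
      \<le> M * sqrt (8 * ln (real n))
        * (sqrt (real K * \<rho>) * sqrt (\<Sum>h<K. (1 - m h) * ADbar n (\<alpha> h) (\<alpha>' h)))"
    using \<open>0 \<le> M\<close> \<open>2 \<le> n\<close> by (intro mult_left_mono) auto
  also have "\<dots> = sqrt 8 * M * sqrt (real K * \<rho> * ln (real n))
      * sqrt (\<Sum>h<K. (1 - m h) * ADbar n (\<alpha> h) (\<alpha>' h))"
    by (simp add: real_sqrt_mult)
  finally show ?thesis .
qed

lemma (in prob_space) integral_le_sqrt_integral:
  fixes f g :: "'a \<Rightarrow> real"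
  assumes "integrable M f" "integrable M g"
    and g_nonneg: "\<And>x. x \<in> space M \<Longrightarrow> 0 \<le> g x"
    and f_le: "\<And>x. x \<in> space M \<Longrightarrow> f x \<le> sqrt (g x)"
  shows "expectation f \<le> sqrt (expectation g)"
proof -
  have tangent: "expectation f \<le> (expectation g + c^2) / (2 * c)" if "0 < c" for c
  proof -
    have "f x \<le> (g x + c^2) / (2 * c)" if "x \<in> space M" for x
    proof -
      have "0 \<le> (sqrt (g x) - c)^2" by simp
      then have "2 * c * sqrt (g x) \<le> g x + c^2"
        using g_nonneg[OF that] by (simp add: power2_eq_square algebra_simps)
      moreover have "2 * c * f x \<le> 2 * c * sqrt (g x)"
        using f_le[OF that] \<open>0 < c\<close> by (intro mult_left_mono) auto
      ultimately have "2 * c * f x \<le> g x + c^2" by linarith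
      then show ?thesis using \<open>0 < c\<close> by (simp add: field_simps)
    qed
    then have "expectation f \<le> expectation (\<lambda>x. (g x + c^2) / (2 * c))"
      using assms by (intro integral_mono) auto
    also have "\<dots> = (expectation g + c^2) / (2 * c)"
      using assms by (simp add: prob_space)
    finally show ?thesis .
  qed
  have "0 \<le> expectation g" using g_nonneg by simp
  show ?thesis
  proof (cases "expectation g = 0")
    case True
    show ?thesis
    proof (rule field_le_epsilon)
      fix e :: real
      assume "0 < e"
      then show "expectation f \<le> sqrt (expectation g) + e"
        using tangent[of "2 * e"] True by (simp add: power2_eq_square)
    qed
  next
    case False
    with \<open>0 \<le> expectation g\<close> have "0 < sqrt (expectation g)" by simp
    from tangent[OF this] show ?thesis
      using \<open>0 \<le> expectation g\<close> by (simp add: real_div_sqrt)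
  qed
qed

lemma expected_Delta_norm_le:
  fixes \<mu> :: "'x measure"
  assumes "prob_space \<mu>"
    and settings: "\<And>x. x \<in> space \<mu> \<Longrightarrow> setting n K d m \<rho> M (A x) (A' x) (W x)"
    and "integrable \<mu> (\<lambda>x. Delta_norm n K d m (A x) (A' x) (W x))"
    and int_ADbar: "\<And>h. h < K \<Longrightarrow> integrable \<mu> (\<lambda>x. ADbar n (A x h) (A' x h))"
  shows "(LINT x|\<mu>. Delta_norm n K d m (A x) (A' x) (W x))
    \<le> sqrt 8 * M * sqrt (real K * \<rho> * ln (real n))
      * sqrt (\<Sum>h<K. (1 - m h) * (LINT x|\<mu>. ADbar n (A x h) (A' x h)))"
proof -
  interpret prob_space \<mu> by fact
  define C where "C = sqrt 8 * M * sqrt (real K * \<rho> * ln (real n))"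
  define S where "S x = (\<Sum>h<K. (1 - m h) * ADbar n (A x h) (A' x h))" for x
  obtain x0 where "x0 \<in> space \<mu>" using not_empty by blast
  note st0 = settings[OF this]
  have "0 \<le> C"
    using setting_M_nonneg[OF st0] setting_pruned_heads_nonneg[OF st0] st0
    by (cases "K = 0") (auto simp: C_def setting_def)
  have S_nonneg: "0 \<le> S x" if "x \<in> space \<mu>" for x
    unfolding S_def using setting_mask_weight_nonneg[OF settings[OF that]]
      setting_ADbar_nonneg[OF settings[OF that]] by (intro sum_nonneg mult_nonneg_nonneg) auto
  have "Delta_norm n K d m (A x) (A' x) (W x) \<le> sqrt (C^2 * S x)" if "x \<in> space \<mu>" for x
  proof -
    note st = settings[OF that]
    have "Delta_norm n K d m (A x) (A' x) (W x) \<le> C * sqrt (S x)"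
      using order_trans[OF Delta_norm_le_sum_sqrt_ADbar[OF st] sum_sqrt_ADbar_le[OF st]]
      unfolding C_def S_def .
    then show ?thesis using \<open>0 \<le> C\<close> by (simp add: real_sqrt_mult)
  qed
  then have "(LINT x|\<mu>. Delta_norm n K d m (A x) (A' x) (W x)) \<le> sqrt (LINT x|\<mu>. C^2 * S x)"
    using assms S_nonneg unfolding S_def
    by (intro integral_le_sqrt_integral) auto
  also have "(LINT x|\<mu>. C^2 * S x) = C^2 * (\<Sum>h<K. (1 - m h) * (LINT x|\<mu>. ADbar n (A x h) (A' x h)))"
    unfolding S_def using int_ADbar by (simp add: integral_sum)
  finally show ?thesis
    using \<open>0 \<le> C\<close> by (simp add: C_def real_sqrt_mult)
qed

theorem mainTheorem6:
  fixes n K d :: nat and m :: "nat \<Rightarrow> real" and \<rho> M :: real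
  shows
  "(\<forall>\<alpha> \<alpha>' V. setting n K d m \<rho> M \<alpha> \<alpha>' V \<longrightarrow>
      Delta_norm n K d m \<alpha> \<alpha>' V
        \<le> M * sqrt (8 * ln (real n)) * (\<Sum>h<K. (1 - m h) * sqrt (ADbar n (\<alpha> h) (\<alpha>' h)))
    \<and> M * sqrt (8 * ln (real n)) * (\<Sum>h<K. (1 - m h) * sqrt (ADbar n (\<alpha> h) (\<alpha>' h)))
        \<le> sqrt 8 * M * sqrt (real K * \<rho> * ln (real n))
            * sqrt (\<Sum>h<K. (1 - m h) * ADbar n (\<alpha> h) (\<alpha>' h)))
   \<and>
   (\<forall>(\<mu> :: 'x measure) A A' W.
      prob_space \<mu> \<longrightarrow>
      (\<forall>x\<in>space \<mu>. setting n K d m \<rho> M (A x) (A' x) (W x)) \<longrightarrow>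
      integrable \<mu> (\<lambda>x. Delta_norm n K d m (A x) (A' x) (W x)) \<longrightarrow>
      (\<forall>h<K. integrable \<mu> (\<lambda>x. ADbar n (A x h) (A' x h))) \<longrightarrow>
      (LINT x|\<mu>. Delta_norm n K d m (A x) (A' x) (W x))
        \<le> sqrt 8 * M * sqrt (real K * \<rho> * ln (real n))
            * sqrt (\<Sum>h<K. (1 - m h) * (LINT x|\<mu>. ADbar n (A x h) (A' x h))))"
  by (intro conjI allI impI Delta_norm_le_sum_sqrt_ADbar sum_sqrt_ADbar_le expected_Delta_norm_le) auto

end
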